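(* Assume the Continuum Hypothesis. Let $X$ be a real Banach space with $\operatorname{dens} X = \operatorname{dens} X^* = \omega_1$. Then $X$ contains an overcomplete set which is dense in $X$.
   Context: $\operatorname{dens}$ denotes the density character. A subset $S$ of a Banach space $X$ with $|S| = \operatorname{dens} X$ is called overcomplete if every subset $\Lambda \subseteq S$ with $|\Lambda| = |S|$ is linearly dense in $X$. *)

theory Defs
  imports "HOL-Analysis.Analysis"
begin

text \<open>Cardinals are the wellorder relations of Main (BNF_Cardinal_Order_Relation):
  card_of A is the cardinal of A, =o / \<le>o compare cardinals, natLeq is omega,
  and cardSuc natLeq is omega_1.\<close>

definition omega1 :: "nat set rel" where
  "omega1 = cardSuc natLeq"

definition CH :: bool where
  "CH \<longleftrightarrow> (card_of (UNIV :: real set), omega1) \<in> ordIso"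

definition dens_is :: "'a::metric_space set \<Rightarrow> 'b rel \<Rightarrow> bool" where
  "dens_is X k \<longleftrightarrow>
     (\<exists>D. D \<subseteq> X \<and> X \<subseteq> closure D \<and> (card_of D, k) \<in> ordIso) \<and>
     (\<forall>D. D \<subseteq> X \<and> X \<subseteq> closure D \<longrightarrow> (k, card_of D) \<in> ordLeq)"

definition overcomplete :: "'a::real_normed_vector set \<Rightarrow> bool" where
  "overcomplete S \<longleftrightarrow>
     dens_is (UNIV :: 'a set) (card_of S) \<and>
     (\<forall>L. L \<subseteq> S \<and> (card_of L, card_of S) \<in> ordIso \<longrightarrow> closure (span L) = UNIV)"

end

theory Submission
  imports Defs "HOL-Library.Countable_Set_Type"
begin

text \<open>Under CH a metric space of density omega_1 has at most omega_1^omega = 2^omega = omega_1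
  points, so the dual can be enumerated as (\<phi>_\<beta>)_{\<beta> < omega_1}, and the pairs (d, n) of
  a dense set D of size omega_1 and a natural number as (d_\<alpha>, n_\<alpha>)_{\<alpha> < omega_1}.
  By the Baire category theorem we may pick x_\<alpha> within 1/(n_\<alpha> + 1) of d_\<alpha> and outside
  the kernels of the countably many nonzero \<phi>_\<beta> with \<beta> \<le> \<alpha>. Then S = {x_\<alpha>} is dense
  of cardinality omega_1. If an uncountable L \<subseteq> S were not linearly dense, Hahn-Banach
  would give a nonzero \<phi>_\<beta> vanishing on L; as \<phi>_\<beta> x_\<alpha> \<noteq> 0 for all \<alpha> \<ge> \<beta>, L would be
  contained in the countable set {x_\<alpha> | \<alpha> < \<beta>}.\<close>

section \<open>Hahn-Banach separation\<close>

text \<open>Partial linear functionals are handled through their graphs, so that the union of a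
  chain of them is again one and Zorn's lemma applies directly.\<close>

definition linear_graph :: "('a::real_vector \<times> real) set \<Rightarrow> bool" where
  "linear_graph G \<longleftrightarrow> (0, 0) \<in> G \<and>
     (\<forall>x a z b. (x, a) \<in> G \<longrightarrow> (z, b) \<in> G \<longrightarrow> (x + z, a + b) \<in> G) \<and>
     (\<forall>x a t. (x, a) \<in> G \<longrightarrow> (t *\<^sub>R x, t * a) \<in> G) \<and>
     (\<forall>x a b. (x, a) \<in> G \<longrightarrow> (x, b) \<in> G \<longrightarrow> a = b)"

lemma linear_graphI:
  assumes "(0, 0) \<in> G"
    and "\<And>x a z b. (x, a) \<in> G \<Longrightarrow> (z, b) \<in> G \<Longrightarrow> (x + z, a + b) \<in> G"
    and "\<And>x a t. (x, a) \<in> G \<Longrightarrow> (t *\<^sub>R x, t * a) \<in> G"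
    and "\<And>x a b. (x, a) \<in> G \<Longrightarrow> (x, b) \<in> G \<Longrightarrow> a = b"
  shows "linear_graph G"
  using assms unfolding linear_graph_def by blast

context
  fixes G :: "('a::real_vector \<times> real) set"
  assumes G: "linear_graph G"
begin

lemma linear_graph_zero: "(0, 0) \<in> G"
  using G unfolding linear_graph_def by blast

lemma linear_graph_add: "(x, a) \<in> G \<Longrightarrow> (z, b) \<in> G \<Longrightarrow> (x + z, a + b) \<in> G"
  using G unfolding linear_graph_def by blast

lemma linear_graph_scaleR: "(x, a) \<in> G \<Longrightarrow> (t *\<^sub>R x, t * a) \<in> G"
  using G unfolding linear_graph_def by blast

lemma linear_graph_unique: "(x, a) \<in> G \<Longrightarrow> (x, b) \<in> G \<Longrightarrow> a = b"
  using G unfolding linear_graph_def by blast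

lemma linear_graph_diff: "(x, a) \<in> G \<Longrightarrow> (z, b) \<in> G \<Longrightarrow> (x - z, a - b) \<in> G"
  using linear_graph_add[of x a "(-1) *\<^sub>R z" "(-1) * b"] linear_graph_scaleR[of z b "-1"] by simp

end

definition graph_extend :: "('a::real_vector \<times> real) set \<Rightarrow> 'a \<Rightarrow> real \<Rightarrow> ('a \<times> real) set" where
  "graph_extend G y c = {(x + t *\<^sub>R y, a + t * c) | x a t. (x, a) \<in> G}"

lemma subset_graph_extend: "G \<subseteq> graph_extend G y c"
  unfolding graph_extend_def by force

lemma graph_extend_point: "linear_graph G \<Longrightarrow> (y, c) \<in> graph_extend G y c"
  unfolding graph_extend_def using linear_graph_zero
  by (intro CollectI exI[of _ 0] exI[of _ 0] exI[of _ 1]) auto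

lemma graph_extend_coefficient_unique:
  assumes G: "linear_graph G" and y: "y \<notin> Domain G"
    and xa: "(x, a) \<in> G" and xa': "(x', a') \<in> G" and eq: "x + t *\<^sub>R y = x' + t' *\<^sub>R y"
  shows "t = t' \<and> a = a'"
proof -
  have t: "t = t'"
  proof (rule ccontr)
    assume "t \<noteq> t'"
    have "x - x' = (t' - t) *\<^sub>R y" using eq by (simp add: algebra_simps)
    with \<open>t \<noteq> t'\<close> have "inverse (t' - t) *\<^sub>R (x - x') = y" by simp
    then have "(y, inverse (t' - t) * (a - a')) \<in> G"
      using linear_graph_scaleR[OF G linear_graph_diff[OF G xa xa']] by metis
    with y show False by blast
  qed
  with eq have "x = x'" by simp
  with t show ?thesis using linear_graph_unique[OF G] xa xa' by blast
qed

lemma linear_graph_graph_extend: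
  assumes G: "linear_graph G" and y: "y \<notin> Domain G"
  shows "linear_graph (graph_extend G y c)"
proof (rule linear_graphI)
  show "(0, 0) \<in> graph_extend G y c"
    using subset_graph_extend linear_graph_zero[OF G] by blast
next
  fix x a z b
  assume "(x, a) \<in> graph_extend G y c" "(z, b) \<in> graph_extend G y c"
  then obtain x1 a1 t1 x2 a2 t2 where "(x1, a1) \<in> G" "(x2, a2) \<in> G"
    "x = x1 + t1 *\<^sub>R y" "a = a1 + t1 * c" "z = x2 + t2 *\<^sub>R y" "b = a2 + t2 * c"
    unfolding graph_extend_def by blast
  then show "(x + z, a + b) \<in> graph_extend G y c"
    unfolding graph_extend_def using linear_graph_add[OF G, of x1 a1 x2 a2]
    by (intro CollectI exI[of _ "x1 + x2"] exI[of _ "a1 + a2"] exI[of _ "t1 + t2"])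
      (auto simp: algebra_simps)
next
  fix x a s
  assume "(x, a) \<in> graph_extend G y c"
  then obtain x1 a1 t1 where "(x1, a1) \<in> G" "x = x1 + t1 *\<^sub>R y" "a = a1 + t1 * c"
    unfolding graph_extend_def by blast
  then show "(s *\<^sub>R x, s * a) \<in> graph_extend G y c"
    unfolding graph_extend_def using linear_graph_scaleR[OF G, of x1 a1 s]
    by (intro CollectI exI[of _ "s *\<^sub>R x1"] exI[of _ "s * a1"] exI[of _ "s * t1"])
      (auto simp: algebra_simps)
next
  fix x a b
  assume "(x, a) \<in> graph_extend G y c" "(x, b) \<in> graph_extend G y c"
  then obtain x1 a1 t1 x2 a2 t2 where "(x1, a1) \<in> G" "(x2, a2) \<in> G"
    "x = x1 + t1 *\<^sub>R y" "a = a1 + t1 * c" "x = x2 + t2 *\<^sub>R y" "b = a2 + t2 * c"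
    unfolding graph_extend_def by blast
  then show "a = b" using graph_extend_coefficient_unique[OF G y] by metis
qed

lemma graph_extend_norm_dominated:
  fixes G :: "('a::real_normed_vector \<times> real) set"
  assumes G: "linear_graph G" and dom: "\<And>x a. (x, a) \<in> G \<Longrightarrow> a \<le> norm x"
  obtains c where "\<And>v e. (v, e) \<in> graph_extend G y c \<Longrightarrow> e \<le> norm v"
proof -
  let ?S = "{a - norm (x - y) | x a. (x, a) \<in> G}"
  txt \<open>Any c between this supremum and the infimum of the norm (z + y) - b keeps the
    extension dominated; by the triangle inequality the two bounds are compatible.\<close>
  define c where "c = Sup ?S"
  have bounds_compatible: "a - norm (x - y) \<le> norm (z + y) - b" if "(x, a) \<in> G" "(z, b) \<in> G" for x a z b
  proof -
    have "a + b \<le> norm ((x - y) + (z + y))" using dom[OF linear_graph_add[OF G that]] by simp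
    also have "\<dots> \<le> norm (x - y) + norm (z + y)" by (rule norm_triangle_ineq)
    finally show ?thesis by simp
  qed
  have "?S \<noteq> {}" using linear_graph_zero[OF G] by blast
  moreover have "bdd_above ?S" using bounds_compatible[OF _ linear_graph_zero[OF G]] unfolding bdd_above_def by auto
  ultimately have c_ge: "\<And>x a. (x, a) \<in> G \<Longrightarrow> a - norm (x - y) \<le> c"
    and c_le: "\<And>z b. (z, b) \<in> G \<Longrightarrow> c \<le> norm (z + y) - b"
    unfolding c_def using bounds_compatible by (auto intro!: cSup_upper cSup_least)
  have "e \<le> norm v" if ve: "(v, e) \<in> graph_extend G y c" for v e
  proof -
    obtain x a t where xa: "(x, a) \<in> G" and v: "v = x + t *\<^sub>R y" and e: "e = a + t * c"
      using ve unfolding graph_extend_def by blast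
    have scaled: "(inverse \<bar>t\<bar> *\<^sub>R x, inverse \<bar>t\<bar> * a) \<in> G"
      using linear_graph_scaleR[OF G xa] .
    consider "t = 0" | "t > 0" | "t < 0" by linarith
    then show ?thesis
    proof cases
      case 1
      then show ?thesis using dom[OF xa] v e by simp
    next
      case 2
      have "t * c \<le> t * (norm (inverse t *\<^sub>R x + y) - inverse t * a)"
        using c_le[OF scaled] 2 by (simp add: mult_left_mono)
      also have "\<dots> = norm (t *\<^sub>R (inverse t *\<^sub>R x + y)) - a"
        using 2 by (simp add: right_diff_distrib)
      also have "t *\<^sub>R (inverse t *\<^sub>R x + y) = x + t *\<^sub>R y"
        using 2 by (simp add: scaleR_add_right)
      finally show ?thesis using v e by simp
    next
      case 3
      have "- t * (inverse (- t) * a - norm (inverse (- t) *\<^sub>R x - y)) \<le> - t * c"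
        using c_ge[OF scaled] 3 by (simp add: mult_left_mono)
      also have "- t * (inverse (- t) * a - norm (inverse (- t) *\<^sub>R x - y))
          = a - norm (- t *\<^sub>R (inverse (- t) *\<^sub>R x - y))"
        using 3 by (simp add: right_diff_distrib)
      also have "- t *\<^sub>R (inverse (- t) *\<^sub>R x - y) = x + t *\<^sub>R y"
        using 3 by (simp add: scaleR_diff_right)
      finally show ?thesis using v e by simp
    qed
  qed
  then show ?thesis by (rule that)
qed

lemma linear_graph_Union_chain:
  assumes C: "chain\<^sub>\<subseteq> C" "C \<noteq> {}" and lin_C: "\<And>G. G \<in> C \<Longrightarrow> linear_graph G"
  shows "linear_graph (\<Union>C)"
proof -
  have common: "\<exists>G\<in>C. p \<in> G \<and> q \<in> G" if pq: "p \<in> \<Union>C" "q \<in> \<Union>C" for p q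
  proof -
    obtain G H where "G \<in> C" "H \<in> C" "p \<in> G" "q \<in> H" using pq by blast
    moreover have "G \<subseteq> H \<or> H \<subseteq> G" using C(1) calculation(1,2) unfolding chain_subset_def by blast
    ultimately show ?thesis by blast
  qed
  show ?thesis
  proof (rule linear_graphI)
    obtain G where "G \<in> C" using C(2) by blast
    then show "(0, 0) \<in> \<Union>C" using linear_graph_zero[OF lin_C] by blast
  next
    fix x a z b assume "(x, a) \<in> \<Union>C" "(z, b) \<in> \<Union>C"
    then obtain G where "G \<in> C" "(x, a) \<in> G" "(z, b) \<in> G" using common by blast
    then show "(x + z, a + b) \<in> \<Union>C" using linear_graph_add[OF lin_C] by blast
  next
    fix x a t assume "(x, a) \<in> \<Union>C"
    then obtain G where "G \<in> C" "(x, a) \<in> G" by blast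
    then show "(t *\<^sub>R x, t * a) \<in> \<Union>C" using linear_graph_scaleR[OF lin_C] by blast
  next
    fix x a b assume "(x, a) \<in> \<Union>C" "(x, b) \<in> \<Union>C"
    then obtain G where "G \<in> C" "(x, a) \<in> G" "(x, b) \<in> G" using common by blast
    then show "a = b" using linear_graph_unique[OF lin_C] by blast
  qed
qed

theorem hahn_banach_norm_dominated:
  fixes G :: "('a::real_normed_vector \<times> real) set"
  assumes G: "linear_graph G" and dom: "\<And>x a. (x, a) \<in> G \<Longrightarrow> a \<le> norm x"
  obtains f where "bounded_linear f" "\<And>x a. (x, a) \<in> G \<Longrightarrow> f x = a"
proof -
  define A where "A = {H. linear_graph H \<and> G \<subseteq> H \<and> (\<forall>x a. (x, a) \<in> H \<longrightarrow> a \<le> norm x)}"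
  have chain_bounded: "\<exists>U\<in>A. \<forall>H\<in>C. H \<subseteq> U" if C: "C \<in> chains A" for C
  proof (cases "C = {}")
    case True
    have "G \<in> A" using G dom unfolding A_def by blast
    with True show ?thesis by blast
  next
    case False
    have CA: "C \<subseteq> A" and chain: "chain\<^sub>\<subseteq> C" using C unfolding chains_def by auto
    then have "linear_graph (\<Union>C)"
      using False linear_graph_Union_chain unfolding A_def by blast
    moreover have "G \<subseteq> \<Union>C" using False CA unfolding A_def by blast
    moreover have "\<forall>x a. (x, a) \<in> \<Union>C \<longrightarrow> a \<le> norm x" using CA unfolding A_def by blast
    ultimately have "\<Union>C \<in> A" unfolding A_def by blast
    then show ?thesis by blast
  qed
  have "\<exists>M\<in>A. \<forall>H\<in>A. M \<subseteq> H \<longrightarrow> H = M"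
    using chain_bounded by (intro Zorn_Lemma2) blast
  then obtain M where "M \<in> A" and maximal: "\<And>H. H \<in> A \<Longrightarrow> M \<subseteq> H \<Longrightarrow> H = M"
    by blast
  then have M: "linear_graph M" "G \<subseteq> M" "\<And>x a. (x, a) \<in> M \<Longrightarrow> a \<le> norm x"
    unfolding A_def by auto
  have total: "x \<in> Domain M" for x
  proof (rule ccontr)
    assume x: "x \<notin> Domain M"
    obtain c where c: "\<And>v e. (v, e) \<in> graph_extend M x c \<Longrightarrow> e \<le> norm v"
      using graph_extend_norm_dominated[OF M(1,3)] by blast
    have "G \<subseteq> graph_extend M x c" using M(2) subset_graph_extend[of M] by blast
    with c have "graph_extend M x c \<in> A"
      using linear_graph_graph_extend[OF M(1) x] unfolding A_def by blast
    then have "graph_extend M x c = M" using maximal subset_graph_extend by blast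
    then show False using graph_extend_point[OF M(1)] x by blast
  qed
  define f where "f x = (THE a. (x, a) \<in> M)" for x
  have f_eq: "f x = a" if "(x, a) \<in> M" for x a
    unfolding f_def using that by (rule the_equality) (metis linear_graph_unique[OF M(1) that])
  have f_graph: "(x, f x) \<in> M" for x
  proof -
    obtain a where "(x, a) \<in> M" using total[of x] by blast
    then show ?thesis using f_eq by simp
  qed
  have "bounded_linear f"
  proof (rule bounded_linear_intro[where K = 1])
    show "f (x + y) = f x + f y" for x y
      by (rule f_eq[OF linear_graph_add[OF M(1) f_graph f_graph]])
    show "f (r *\<^sub>R x) = r *\<^sub>R f x" for r x
      using f_eq[OF linear_graph_scaleR[OF M(1) f_graph]] by simp
    show "norm (f x) \<le> norm x * 1" for x
    proof -
      have "f (- x) = - f x" using f_eq[OF linear_graph_scaleR[OF M(1) f_graph[of x], of "- 1"]] by simp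
      then show ?thesis using M(3)[OF f_graph[of x]] M(3)[OF f_graph[of "- x"]] by simp
    qed
  qed
  moreover have "f x = a" if "(x, a) \<in> G" for x a using that M(2) f_eq by blast
  ultimately show ?thesis by (rule that)
qed

corollary hahn_banach_subspace_separation:
  fixes M :: "'a::real_normed_vector set"
  assumes M: "subspace M" and y: "y \<notin> closure M"
  obtains f :: "'a \<Rightarrow>\<^sub>L real" where "f y \<noteq> 0" "\<And>m. m \<in> M \<Longrightarrow> f m = 0"
proof -
  define d where "d = infdist y M"
  have "M \<noteq> {}" using subspace_0[OF M] by blast
  then have "d \<noteq> 0" using y in_closure_iff_infdist_zero unfolding d_def by blast
  then have d: "d > 0" using infdist_nonneg[of y M] unfolding d_def by linarith
  define H where "H = M \<times> {0::real}"
  have H: "linear_graph H"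
    unfolding H_def using subspace_0[OF M] subspace_add[OF M] subspace_scale[OF M]
    by (intro linear_graphI) auto
  have yH: "y \<notin> Domain H" unfolding H_def using y closure_subset by blast
  have dom: "a \<le> norm x" if xa: "(x, a) \<in> graph_extend H y d" for x a
  proof -
    obtain m t where m: "m \<in> M" and x: "x = m + t *\<^sub>R y" and a: "a = t * d"
      using xa unfolding graph_extend_def H_def by auto
    show ?thesis
    proof (cases "t = 0")
      case True
      then show ?thesis using a by simp
    next
      case False
      have "- (inverse t *\<^sub>R m) \<in> M" using m subspace_neg[OF M] subspace_scale[OF M] by blast
      then have "d \<le> dist y (- (inverse t *\<^sub>R m))" unfolding d_def by (rule infdist_le)
      then have "\<bar>t\<bar> * d \<le> \<bar>t\<bar> * norm (y + inverse t *\<^sub>R m)"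
        by (simp add: dist_norm mult_left_mono)
      also have "\<dots> = norm (t *\<^sub>R (y + inverse t *\<^sub>R m))" by simp
      also have "t *\<^sub>R (y + inverse t *\<^sub>R m) = x"
        using False x by (simp add: scaleR_add_right add.commute)
      finally have "\<bar>t\<bar> * d \<le> norm x" .
      moreover have "t * d \<le> \<bar>t\<bar> * d" using d by (simp add: mult_right_mono)
      ultimately show ?thesis using a by linarith
    qed
  qed
  obtain f where f: "bounded_linear f" and fG: "\<And>x a. (x, a) \<in> graph_extend H y d \<Longrightarrow> f x = a"
    using hahn_banach_norm_dominated[OF linear_graph_graph_extend[OF H yH] dom] by blast
  have "Blinfun f y = d"
    using fG[OF graph_extend_point[OF H]] by (simp add: bounded_linear_Blinfun_apply[OF f])
  moreover have "Blinfun f m = 0" if "m \<in> M" for m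
  proof -
    have "(m, 0) \<in> graph_extend H y d" using that subset_graph_extend[of H y d] unfolding H_def by blast
    then show ?thesis using fG by (simp add: bounded_linear_Blinfun_apply[OF f])
  qed
  ultimately show ?thesis using d by (intro that[of "Blinfun f"]) auto
qed

section \<open>Avoiding countably many kernels\<close>

lemma interior_blinfun_kernel:
  fixes f :: "'a::real_normed_vector \<Rightarrow>\<^sub>L real"
  assumes "f \<noteq> 0"
  shows "interior {x. f x = 0} = {}"
proof (rule ccontr)
  assume "interior {x. f x = 0} \<noteq> {}"
  then obtain x e where e: "e > 0" "ball x e \<subseteq> {x. f x = 0}"
    by (metis ex_in_conv mem_interior)
  obtain v where v: "f v \<noteq> 0" using assms by (metis blinfun_eqI zero_blinfun.rep_eq)
  then have nv: "norm v > 0" by (metis blinfun.zero_right zero_less_norm_iff)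
  define z where "z = x + (e / 2 / norm v) *\<^sub>R v"
  have "dist x z = e / 2" unfolding z_def dist_norm using nv e by simp
  then have "z \<in> ball x e" "x \<in> ball x e" using e by auto
  then have "f z = 0" "f x = 0" using e(2) by blast+
  moreover have "f z = f x + (e / 2 / norm v) * f v"
    unfolding z_def by (simp add: blinfun.add_right blinfun.scaleR_right)
  ultimately show False using v e nv by simp
qed

lemma ball_avoids_countably_many_kernels:
  fixes C :: "('a::banach \<Rightarrow>\<^sub>L real) set"
  assumes C: "countable C" and r: "r > 0"
  obtains x where "x \<in> ball c r" "\<And>f. f \<in> C \<Longrightarrow> f \<noteq> 0 \<Longrightarrow> f x \<noteq> 0"
proof -
  define K where "K = (\<lambda>f::'a \<Rightarrow>\<^sub>L real. {x. f x = 0}) ` {f \<in> C. f \<noteq> 0}"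
  have "closed T \<and> interior T = {}" if "T \<in> K" for T
    using that interior_blinfun_kernel unfolding K_def by (auto intro!: closed_Collect_eq continuous_intros)
  then have "interior (\<Union>K) = {}"
    using Baire_category_alt[of euclidean K] completely_metrizable_space_euclidean C
    unfolding K_def closed_closedin by auto
  then have "\<not> ball c r \<subseteq> \<Union>K"
    using r interior_maximal[OF _ open_ball, of c r "\<Union>K"] by (metis centre_in_ball empty_iff subsetD)
  then show ?thesis using that unfolding K_def by blast
qed

section \<open>Cardinality estimates at omega_1\<close>

unbundle cardinal_syntax

lemma Card_order_omega1: "Card_order omega1"
  unfolding omega1_def by (rule cardSuc_Card_order[OF natLeq_Card_order])

lemma countable_underS_omega1: "\<alpha> \<in> Field omega1 \<Longrightarrow> countable (underS omega1 \<alpha>)"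
  using card_of_underS[OF Card_order_omega1] countable_card_le_natLeq
    cardSuc_ordLeq_ordLess[OF natLeq_Card_order card_of_Card_order]
  unfolding omega1_def by blast

lemma countable_under_omega1: "\<alpha> \<in> Field omega1 \<Longrightarrow> countable (under omega1 \<alpha>)"
  using Refl_under_underS[OF wo_rel.REFL[OF Card_order_wo_rel[OF Card_order_omega1]]]
    countable_underS_omega1 by simp

lemma underS_omega1_if_not_under:
  assumes "\<alpha> \<in> Field omega1" "\<beta> \<in> Field omega1" "\<beta> \<notin> under omega1 \<alpha>"
  shows "\<alpha> \<in> underS omega1 \<beta>"
proof -
  have wo: "wo_rel omega1" by (rule Card_order_wo_rel[OF Card_order_omega1])
  have "(\<beta>, \<alpha>) \<notin> omega1" using assms(3) unfolding under_def by simp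
  then have "(\<alpha>, \<beta>) \<in> omega1" "\<alpha> \<noteq> \<beta>"
    using wo_rel.in_notinI[OF wo _ assms(1,2)] wo_rel.REFL[OF wo] assms(1) unfolding refl_on_def by blast+
  then show ?thesis unfolding underS_def by simp
qed

lemma uncountable_if_ordIso_omega1: "|L| =o omega1 \<Longrightarrow> uncountable L"
proof
  assume L: "|L| =o omega1" and "countable L"
  then have "|L| \<le>o natLeq" using countable_card_le_natLeq by blast
  then have "omega1 \<le>o natLeq" using L ordIso_symmetric ordIso_ordLeq_trans by blast
  moreover have "natLeq <o omega1" unfolding omega1_def by (rule cardSuc_greater[OF natLeq_Card_order])
  ultimately show False using not_ordLess_ordLeq by blast
qed

lemma lepoll_Field_omega1: "|A| \<le>o omega1 \<Longrightarrow> A \<lesssim> Field omega1"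
proof -
  assume "|A| \<le>o omega1"
  then have "|A| \<le>o |Field omega1|"
    using card_of_Field_ordIso[OF Card_order_omega1] ordIso_symmetric ordLeq_ordIso_trans by blast
  then show ?thesis unfolding lepoll_def using card_of_ordLeq by blast
qed

lemma Times_nat_lepoll_Field_omega1:
  assumes "|D| \<le>o omega1"
  shows "D \<times> (UNIV :: nat set) \<lesssim> Field omega1"
proof -
  have "uncountable (Field omega1)"
    by (rule uncountable_if_ordIso_omega1[OF card_of_Field_ordIso[OF Card_order_omega1]])
  then have inf: "infinite (Field omega1)" using countable_finite by blast
  have "D \<times> (UNIV :: nat set) \<lesssim> Field omega1 \<times> Field omega1"
    using lepoll_Field_omega1[OF assms] inf[unfolded infinite_le_lepoll] by (rule times_lepoll_mono)
  moreover have "Field omega1 \<times> Field omega1 \<approx> Field omega1"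
    using card_of_Times_same_infinite[OF inf] eqpoll_iff_card_of_ordIso by blast
  ultimately show ?thesis using lepoll_trans2 by blast
qed

lemma nat_to_real_lepoll_real: "(UNIV :: (nat \<Rightarrow> real) set) \<lesssim> (UNIV :: real set)"
proof -
  obtain g :: "real \<Rightarrow> nat set" where "inj g"
    using nat_sets_eqpoll_reals eqpoll_sym bij_betw_imp_inj_on unfolding eqpoll_def by blast
  define F where "F s = {prod_encode (n, m) | n m. m \<in> g (s n)}" for s :: "nat \<Rightarrow> real"
  have F_iff: "prod_encode (n, m) \<in> F s \<longleftrightarrow> m \<in> g (s n)" for s n m
    unfolding F_def by (auto dest: inj_onD[OF inj_prod_encode, simplified])
  have "inj F"
  proof (rule injI)
    fix s s' assume "F s = F s'"
    then have "g (s n) = g (s' n)" for n using F_iff by blast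
    then show "s = s'" using \<open>inj g\<close> by (auto simp: inj_def)
  qed
  then have "(UNIV :: (nat \<Rightarrow> real) set) \<lesssim> (UNIV :: nat set set)" unfolding lepoll_def by blast
  also have "\<dots> \<approx> (UNIV :: real set)" by (rule nat_sets_eqpoll_reals)
  finally show ?thesis .
qed

lemma lepoll_real_if_dense_lepoll_real:
  fixes D :: "'a::metric_space set"
  assumes D: "UNIV \<subseteq> closure D" and "D \<lesssim> (UNIV :: real set)"
  shows "(UNIV :: 'a set) \<lesssim> (UNIV :: real set)"
proof -
  obtain h :: "'a \<Rightarrow> real" where h: "inj_on h D" using assms(2) unfolding lepoll_def by blast
  let ?Q = "{s :: nat \<Rightarrow> 'a. \<forall>n. s n \<in> D}"
  have "(UNIV :: 'a set) \<subseteq> lim ` ?Q"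
  proof
    fix z :: 'a
    obtain s where "\<forall>n. s n \<in> D" "s \<longlonglongrightarrow> z" using D closure_sequential by blast
    then show "z \<in> lim ` ?Q" using limI by blast
  qed
  then have "(UNIV :: 'a set) \<lesssim> ?Q" by (rule subset_image_lepoll)
  also have "?Q \<lesssim> (UNIV :: (nat \<Rightarrow> real) set)"
    unfolding lepoll_def using h by (intro exI[of _ "(\<circ>) h"]) (auto simp: inj_on_def fun_eq_iff)
  also have "\<dots> \<lesssim> (UNIV :: real set)" by (rule nat_to_real_lepoll_real)
  finally show ?thesis .
qed

lemma lepoll_Field_omega1_if_dens_omega1:
  assumes "CH" and "dens_is (UNIV :: 'a::metric_space set) omega1"
  shows "(UNIV :: 'a set) \<lesssim> Field omega1"
proof -
  have real: "|UNIV :: real set| =o omega1" using assms(1) unfolding CH_def .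
  obtain D :: "'a set" where D: "UNIV \<subseteq> closure D" "|D| =o omega1"
    using assms(2) unfolding dens_is_def by blast
  then have "D \<lesssim> (UNIV :: real set)"
    using real ordIso_symmetric ordIso_transitive eqpoll_iff_card_of_ordIso eqpoll_imp_lepoll by metis
  then have "(UNIV :: 'a set) \<lesssim> (UNIV :: real set)" using lepoll_real_if_dense_lepoll_real D(1) by blast
  also have "(UNIV :: real set) \<lesssim> Field omega1"
    using real lepoll_Field_omega1 ordIso_iff_ordLeq by blast
  finally show ?thesis .
qed

section \<open>Dense overcomplete sets\<close>

lemma dense_image_if_approximates:
  fixes x :: "'i \<Rightarrow> 'a::metric_space"
  assumes D: "UNIV \<subseteq> closure D"
    and approx: "\<And>d n. d \<in> D \<Longrightarrow> \<exists>i\<in>I. dist (x i) d < 1 / (real n + 1)"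
  shows "closure (x ` I) = UNIV"
proof -
  have "z \<in> closure (x ` I)" for z
  proof (unfold closure_approachable, intro allI impI)
    fix e :: real assume "e > 0"
    then have e2: "e / 2 > 0" by simp
    have "z \<in> closure D" using D by blast
    then obtain d where d: "d \<in> D" "dist d z < e / 2"
      using e2 unfolding closure_approachable by blast
    obtain n :: nat where n: "inverse (real (Suc n)) < e / 2"
      using reals_Archimedean[OF e2] by blast
    obtain i where "i \<in> I" "dist (x i) d < 1 / (real n + 1)" using approx[OF d(1)] by blast
    moreover have "1 / (real n + 1) = inverse (real (Suc n))" by (simp add: divide_inverse)
    ultimately have "dist (x i) z < e" using d(2) n dist_triangle[of "x i" z d] by linarith
    then show "\<exists>y\<in>x ` I. dist y z < e" using \<open>i \<in> I\<close> by blast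
  qed
  then show ?thesis by blast
qed

lemma dens_is_card_of_dense:
  fixes S :: "'a::metric_space set" and k :: "'b rel"
  assumes dens: "dens_is (UNIV :: 'a set) k"
    and S: "closure S = UNIV" "|S| \<le>o k"
  shows "dens_is (UNIV :: 'a set) |S|" "|S| =o k"
proof -
  have min: "k \<le>o |E|" if "UNIV \<subseteq> closure E" for E :: "'a set"
    using dens that unfolding dens_is_def by blast
  show iso: "|S| =o k" using S min[of S] ordIso_iff_ordLeq by blast
  have "|S| \<le>o |E|" if "UNIV \<subseteq> closure E" for E :: "'a set"
    using iso min[OF that] ordIso_ordLeq_trans by blast
  then show "dens_is (UNIV :: 'a set) |S|"
    unfolding dens_is_def using S(1) card_of_refl[of S] by blast
qed

lemma uncountable_subset_linearly_dense:
  fixes x :: "nat set \<Rightarrow> 'a::real_normed_vector" and \<phi> :: "nat set \<Rightarrow> ('a \<Rightarrow>\<^sub>L real)"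
  assumes \<phi>: "UNIV \<subseteq> \<phi> ` Field omega1"
    and avoid: "\<And>\<alpha> \<beta>. \<alpha> \<in> Field omega1 \<Longrightarrow> \<beta> \<in> under omega1 \<alpha> \<Longrightarrow> \<phi> \<beta> \<noteq> 0 \<Longrightarrow> \<phi> \<beta> (x \<alpha>) \<noteq> 0"
    and L: "L \<subseteq> x ` Field omega1" "uncountable L"
  shows "closure (span L) = UNIV"
proof (rule ccontr)
  assume "closure (span L) \<noteq> UNIV"
  then obtain y where "y \<notin> closure (span L)" by blast
  then obtain f :: "'a \<Rightarrow>\<^sub>L real" where f: "f y \<noteq> 0" "\<And>m. m \<in> span L \<Longrightarrow> f m = 0"
    by (rule hahn_banach_subspace_separation[OF subspace_span]) (rule that)
  have "f \<in> \<phi> ` Field omega1" using \<phi> UNIV_I by (rule subsetD)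
  then obtain \<beta> where \<beta>: "\<beta> \<in> Field omega1" "\<phi> \<beta> = f" by (metis imageE)
  have "f \<noteq> 0" using f(1) by auto
  have "L \<subseteq> x ` underS omega1 \<beta>"
  proof
    fix l assume "l \<in> L"
    then obtain \<alpha> where \<alpha>: "\<alpha> \<in> Field omega1" "l = x \<alpha>" using L(1) by blast
    have "f (x \<alpha>) = 0" using f(2)[OF span_base[OF \<open>l \<in> L\<close>]] \<alpha>(2) by simp
    then have "\<beta> \<notin> under omega1 \<alpha>" using avoid[OF \<alpha>(1), of \<beta>] \<beta>(2) \<open>f \<noteq> 0\<close> by blast
    then have "\<alpha> \<in> underS omega1 \<beta>" using underS_omega1_if_not_under \<alpha>(1) \<beta>(1) by blast
    then show "l \<in> x ` underS omega1 \<beta>" using \<alpha>(2) by blast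
  qed
  moreover have "countable (x ` underS omega1 \<beta>)"
    using countable_underS_omega1[OF \<beta>(1)] by (rule countable_image)
  ultimately have "countable L" by (rule countable_subset)
  with L(2) show False by blast
qed

lemma dense_family_avoiding_kernels:
  fixes D :: "'a::banach set" and \<phi> :: "nat set \<Rightarrow> ('a \<Rightarrow>\<^sub>L real)"
  assumes D: "UNIV \<subseteq> closure D" "|D| \<le>o omega1"
  obtains x :: "nat set \<Rightarrow> 'a" where "closure (x ` Field omega1) = UNIV"
    "\<And>\<alpha> \<beta>. \<alpha> \<in> Field omega1 \<Longrightarrow> \<beta> \<in> under omega1 \<alpha> \<Longrightarrow> \<phi> \<beta> \<noteq> 0 \<Longrightarrow> \<phi> \<beta> (x \<alpha>) \<noteq> 0"
proof -
  obtain \<psi> :: "nat set \<Rightarrow> 'a \<times> nat" where \<psi>: "D \<times> UNIV \<subseteq> \<psi> ` Field omega1"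
    using Times_nat_lepoll_Field_omega1[OF D(2)] unfolding lepoll_iff by blast
  have "\<exists>y. dist (fst (\<psi> \<alpha>)) y < 1 / (real (snd (\<psi> \<alpha>)) + 1) \<and>
      (\<forall>\<beta>\<in>under omega1 \<alpha>. \<phi> \<beta> \<noteq> 0 \<longrightarrow> \<phi> \<beta> y \<noteq> 0)" if "\<alpha> \<in> Field omega1" for \<alpha>
  proof -
    have "countable (\<phi> ` under omega1 \<alpha>)" using countable_under_omega1[OF that] by simp
    moreover have "1 / (real (snd (\<psi> \<alpha>)) + 1) > 0" by simp
    ultimately obtain y where "y \<in> ball (fst (\<psi> \<alpha>)) (1 / (real (snd (\<psi> \<alpha>)) + 1))"
      "\<And>f. f \<in> \<phi> ` under omega1 \<alpha> \<Longrightarrow> f \<noteq> 0 \<Longrightarrow> f y \<noteq> 0"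
      by (rule ball_avoids_countably_many_kernels[where c = "fst (\<psi> \<alpha>)"]) blast
    then show ?thesis by auto
  qed
  then obtain x where x_ball: "\<And>\<alpha>. \<alpha> \<in> Field omega1 \<Longrightarrow> dist (fst (\<psi> \<alpha>)) (x \<alpha>) < 1 / (real (snd (\<psi> \<alpha>)) + 1)"
    and x_avoid: "\<And>\<alpha> \<beta>. \<alpha> \<in> Field omega1 \<Longrightarrow> \<beta> \<in> under omega1 \<alpha> \<Longrightarrow> \<phi> \<beta> \<noteq> 0 \<Longrightarrow> \<phi> \<beta> (x \<alpha>) \<noteq> 0"
    by metis
  have "closure (x ` Field omega1) = UNIV"
  proof (rule dense_image_if_approximates[OF D(1)])
    fix d n assume "d \<in> D"
    then have "(d, n) \<in> \<psi> ` Field omega1" using \<psi> by blast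
    then obtain \<alpha> where \<alpha>: "\<alpha> \<in> Field omega1" "\<psi> \<alpha> = (d, n)" by auto
    then have "dist (x \<alpha>) d < 1 / (real n + 1)" using x_ball[OF \<alpha>(1)] by (simp add: dist_commute)
    then show "\<exists>\<alpha>\<in>Field omega1. dist (x \<alpha>) d < 1 / (real n + 1)" using \<alpha>(1) by blast
  qed
  then show ?thesis using x_avoid by (rule that)
qed

theorem theorem4p2:
  assumes "CH"
    and "dens_is (UNIV :: ('a::banach) set) omega1"
    and "dens_is (UNIV :: ('a \<Rightarrow>\<^sub>L real) set) omega1"
  shows "\<exists>S :: 'a set. overcomplete S \<and> closure S = UNIV"
proof -
  obtain D :: "'a set" where D: "UNIV \<subseteq> closure D" "|D| \<le>o omega1"
    using assms(2) ordIso_iff_ordLeq unfolding dens_is_def by blast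
  obtain \<phi> :: "nat set \<Rightarrow> ('a \<Rightarrow>\<^sub>L real)" where \<phi>: "UNIV \<subseteq> \<phi> ` Field omega1"
    using lepoll_Field_omega1_if_dens_omega1[OF assms(1,3)] unfolding lepoll_iff by blast
  obtain x where dense: "closure (x ` Field omega1) = UNIV"
    and avoid: "\<And>\<alpha> \<beta>. \<alpha> \<in> Field omega1 \<Longrightarrow> \<beta> \<in> under omega1 \<alpha> \<Longrightarrow> \<phi> \<beta> \<noteq> 0 \<Longrightarrow> \<phi> \<beta> (x \<alpha>) \<noteq> 0"
    using dense_family_avoiding_kernels[OF D] by blast
  define S where "S = x ` Field omega1"
  have "|S| \<le>o omega1"
    unfolding S_def by (rule ordLeq_ordIso_trans[OF card_of_image card_of_Field_ordIso[OF Card_order_omega1]])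
  then have dens: "dens_is (UNIV :: 'a set) |S|" and S: "|S| =o omega1"
    using dense dens_is_card_of_dense[OF assms(2)] unfolding S_def by blast+
  have "closure (span L) = UNIV" if L: "L \<subseteq> S" "|L| =o |S|" for L
  proof (rule uncountable_subset_linearly_dense[where \<phi> = \<phi> and x = x, OF \<phi> avoid])
    show "L \<subseteq> x ` Field omega1" using L(1) unfolding S_def .
    show "uncountable L" by (rule uncountable_if_ordIso_omega1[OF ordIso_transitive[OF L(2) S]])
  qed
  with dens dense show ?thesis unfolding overcomplete_def S_def by blast
qed

end
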